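(* Let $\mathcal N$ be a fully connected feed-forward ReLU network with $d$ hidden layers. For all $\theta$ outside a Lebesgue-null subset of $\mathbb R^{\#\mathrm{params}}$ the following holds: whenever $\mathcal A_1\neq\mathcal A_2$ are activation patterns with $\mathcal R(\mathcal A_1;\theta)\neq\emptyset$ and $\mathcal R(\mathcal A_2;\theta)\neq\emptyset$, and such that for each $j\in\{1,2\}$ and each hidden layer there is a neuron $z$ in that layer with $a_{j,z}=1$, the (constant) value of $\nabla\mathcal N(x;\theta)$ for $x$ in $\mathcal R(\mathcal A_1;\theta)$ differs from its value for $x$ in $\mathcal R(\mathcal A_2;\theta)$.
   Context: A fully connected feed-forward ReLU network $\mathcal N$ with input dimension $n_{\mathrm{in}}$ and output dimension $1$ has hidden layers $1,\dots,d$, every neuron of layer $\ell-1$ (or every input coordinate, for $\ell=1$) joined to every neuron of layer $\ell$, each edge carrying its own weight. A neuron $z$ in layer $1$ has pre-activation $z(x;\theta)=\sum_i w_{z,i}x_i$; a neuron $z$ in layer $\ell\ge2$ has pre-activation $z(x;\theta)=\sum_{z'}w_{z,z'}\max\{0,z'(x;\theta)-b_{z'}\}$; $b_z$ is its bias. The output is $\mathcal N(x;\theta)=\sum_z w_z\max\{0,z(x;\theta)-b_z\}-b_{\mathrm{out}}$ over neurons of layer $d$. $\theta$ is the vector of all weights and biases. An activation pattern is $\mathcal A_j=\{a_{j,z}\}\in\{-1,1\}^{\#\mathrm{neurons}}$, with activation region $\mathcal R(\mathcal A_j;\theta)=\{x:\ \mathrm{sgn}(z(x;\theta)-b_z)=a_{j,z}\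 \forall z\}$; $\mathcal N(\cdot;\theta)$ is affine on each activation region. *)

theory Defs
  imports "HOL-Analysis.Analysis"
begin

text \<open>Architecture: input space real^'n (input dimension CARD('n)); hidden layer widths
  given by the list ws: hidden layer l (1 \<le> l \<le> length ws) has neurons 0..<ws!(l-1).\<close>

datatype 'n prm =
    Win nat 'n          \<comment> \<open>weight from input coordinate j to neuron i of layer 1\<close>
  | W nat nat nat       \<comment> \<open>W l i k: weight from neuron k of layer l-1 to neuron i of layer l (l \<ge> 2)\<close>
  | B nat nat
  | Wout nat
  | Bout

definition params :: "nat list \<Rightarrow> ('n::finite) prm set" where
  "params ws =
     {Win i j | i j. i < ws ! 0}
   \<union> {W l i k | l i k. 2 \<le> l \<and> l \<le> length ws \<and> i < ws ! (l - 1) \<and> k < ws ! (l - 2)}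
   \<union> {B l i | l i. 1 \<le> l \<and> l \<le> length ws \<and> i < ws ! (l - 1)}
   \<union> {Wout k | k. k < ws ! (length ws - 1)}
   \<union> {Bout}"

definition neurons :: "nat list \<Rightarrow> (nat \<times> nat) set" where
  "neurons ws = {(l, i). 1 \<le> l \<and> l \<le> length ws \<and> i < ws ! (l - 1)}"

fun preact :: "nat list \<Rightarrow> (('n::finite) prm \<Rightarrow> real) \<Rightarrow> nat \<Rightarrow> nat \<Rightarrow> real^'n \<Rightarrow> real" where
  "preact ws \<theta> 0 i x = 0"
| "preact ws \<theta> (Suc 0) i x = (\<Sum>j\<in>UNIV. \<theta> (Win i j) * x $ j)"
| "preact ws \<theta> (Suc (Suc l)) i x =
     (\<Sum>k<ws ! l. \<theta> (W (Suc (Suc l)) i k) * max 0 (preact ws \<theta> (Suc l) k x - \<theta> (B (Suc l) k)))"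

definition net :: "nat list \<Rightarrow> (('n::finite) prm \<Rightarrow> real) \<Rightarrow> real^'n \<Rightarrow> real" where
  "net ws \<theta> x =
     (\<Sum>k<ws ! (length ws - 1).
        \<theta> (Wout k) * max 0 (preact ws \<theta> (length ws) k x - \<theta> (B (length ws) k))) - \<theta> Bout"

definition patterns :: "nat list \<Rightarrow> (nat \<times> nat \<Rightarrow> real) set" where
  "patterns ws = (neurons ws \<rightarrow>\<^sub>E {-1, 1})"

definition region :: "nat list \<Rightarrow> (('n::finite) prm \<Rightarrow> real) \<Rightarrow> (nat \<times> nat \<Rightarrow> real) \<Rightarrow> (real^'n) set" where
  "region ws \<theta> A = {x. \<forall>(l, i)\<in>neurons ws. sgn (preact ws \<theta> l i x - \<theta> (B l i)) = A (l, i)}"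

definition active_every_layer :: "nat list \<Rightarrow> (nat \<times> nat \<Rightarrow> real) \<Rightarrow> bool" where
  "active_every_layer ws A = (\<forall>l\<in>{1..length ws}. \<exists>i < ws ! (l - 1). A (l, i) = 1)"

end

theory Submission
  imports Defs
begin

text \<open>On an activation region the network is affine, and its gradient is a polynomial in the
  weights: layer by layer, the gradient of a neuron is \<open>\<Sum>\<^sub>k w\<^sub>i\<^sub>k e\<^sub>k\<close>, where \<open>e\<^sub>k\<close> is the gradient of
  neuron \<open>k\<close> of the previous layer if it is active and \<open>0\<close> otherwise, and does not depend on the
  weights \<open>w\<^sub>i\<^sub>k\<close> entering the layer. An expression \<open>c \<theta> \<cdot> \<theta>\<^sub>v + h \<theta>\<close> with \<open>c, h\<close> independent of
  the coordinate \<open>\<theta>\<^sub>v\<close> and \<open>c \<noteq> 0\<close> almost everywhere is itself nonzero almost everywhere (Fubini: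
  each line in direction \<open>v\<close> meets its zero set in one point). Since every layer contains an
  active neuron, induction over the layers shows that the gradients of two different patterns
  differ for almost every \<open>\<theta>\<close>: at the first layer where the patterns differ one of the \<open>e\<^sub>k\<close> is
  a nonzero gradient, above it an \<open>e\<^sub>k\<close> of a neuron active in both is a nonzero difference.
  There are only finitely many pairs of patterns.\<close>

lemma has_derivative_max0:
  fixes f :: "'a::real_normed_vector \<Rightarrow> real"
  assumes f: "(f has_derivative f') (at x)" and nz: "f x \<noteq> 0"
  shows "((\<lambda>y. max 0 (f y)) has_derivative (\<lambda>h. if 0 < f x then f' h else 0)) (at x)"
proof -
  have lim: "(f \<longlongrightarrow> f x) (at x)"
    using has_derivative_continuous[OF f] by (simp add: continuous_at)
  show ?thesis
  proof (cases "0 < f x")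
    case True
    have "\<forall>\<^sub>F y in at x. f y = max 0 (f y)"
      using order_tendstoD(1)[OF lim True] by (rule eventually_mono) simp
    from has_derivative_transform_eventually[OF f this] True
    show ?thesis by simp
  next
    case False
    then have "f x < 0" using nz by simp
    have "\<forall>\<^sub>F y in at x. 0 = max 0 (f y)"
      using order_tendstoD(2)[OF lim \<open>f x < 0\<close>] by (rule eventually_mono) simp
    from has_derivative_transform_eventually[OF has_derivative_const this] \<open>f x < 0\<close>
    show ?thesis using False by simp
  qed
qed

lemma measurable_PiM_lborel_component:
  "(\<lambda>\<theta>. \<theta> p) \<in> borel_measurable (Pi\<^sub>M P (\<lambda>_. lborel :: real measure))"
proof (cases "p \<in> P")
  case True
  then show ?thesis by measurable
next
  case False
  then have "\<theta> p = undefined" if "\<theta> \<in> space (Pi\<^sub>M P (\<lambda>_. lborel :: real measure))" for \<theta>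
    using that by (auto simp: space_PiM PiE_def extensional_def)
  then show ?thesis by (subst measurable_cong[where g="\<lambda>_. undefined"]) auto
qed

lemma AE_PiM_lborel_affine_nonzero:
  fixes c h :: "('a \<Rightarrow> real) \<Rightarrow> real"
  assumes P: "finite P" "v \<in> P"
    and meas: "c \<in> borel_measurable (Pi\<^sub>M P (\<lambda>_. lborel))" "h \<in> borel_measurable (Pi\<^sub>M P (\<lambda>_. lborel))"
    and indep: "\<And>\<theta> t. c (\<theta>(v := t)) = c \<theta>" "\<And>\<theta> t. h (\<theta>(v := t)) = h \<theta>"
    and c: "AE \<theta> in Pi\<^sub>M P (\<lambda>_. lborel). c \<theta> \<noteq> 0"
  shows "AE \<theta> in Pi\<^sub>M P (\<lambda>_. lborel). c \<theta> * \<theta> v + h \<theta> \<noteq> 0"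
proof -
  interpret product_sigma_finite "\<lambda>_::'a. lborel :: real measure"
    by (simp add: product_sigma_finite_def lborel.sigma_finite_measure_axioms)
  let ?M = "Pi\<^sub>M P (\<lambda>_. lborel :: real measure)"
  let ?bad = "{\<theta> \<in> space ?M. c \<theta> \<noteq> 0 \<and> c \<theta> * \<theta> v + h \<theta> = 0}"
  have v: "(\<lambda>\<theta>. \<theta> v) \<in> borel_measurable ?M" by (rule measurable_PiM_lborel_component)
  have bad: "?bad \<in> sets ?M" using meas v by measurable
  have "(\<integral>\<^sup>+ y. indicator ?bad (\<theta>(v := y)) \<partial>lborel) = 0" for \<theta>
  proof -
    have "AE y in lborel. indicator ?bad (\<theta>(v := y)) = (0::ennreal)"
      using AE_lborel_singleton[of "- h \<theta> / c \<theta>"]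
      by eventually_elim (auto simp: indicator_def indep field_simps)
    then show ?thesis by (simp add: nn_integral_cong_AE)
  qed
  moreover have "insert v (P - {v}) = P" using P by auto
  ultimately have "emeasure ?M ?bad = 0"
    using product_nn_integral_insert[of "P - {v}" v "indicator ?bad"] P bad by simp
  then have "AE \<theta> in ?M. \<not> (c \<theta> \<noteq> 0 \<and> c \<theta> * \<theta> v + h \<theta> = 0)"
    using bad by (intro AE_I'[of ?bad]) auto
  with c show ?thesis by eventually_elim auto
qed

lemma AE_PiM_lborel_sum_nonzero:
  fixes e :: "'k \<Rightarrow> ('a \<Rightarrow> real) \<Rightarrow> real"
  assumes P: "finite P" and K: "finite K" "k' \<in> K" and var: "inj_on var K" "var k' \<in> P"
    and meas: "\<And>k. k \<in> K \<Longrightarrow> e k \<in> borel_measurable (Pi\<^sub>M P (\<lambda>_. lborel))"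
    and indep: "\<And>k \<theta> t. k \<in> K \<Longrightarrow> e k (\<theta>(var k' := t)) = e k \<theta>"
    and e: "AE \<theta> in Pi\<^sub>M P (\<lambda>_. lborel). e k' \<theta> \<noteq> 0"
  shows "AE \<theta> in Pi\<^sub>M P (\<lambda>_. lborel). (\<Sum>k\<in>K. \<theta> (var k) * e k \<theta>) \<noteq> 0"
proof -
  define h where "h \<theta> = (\<Sum>k\<in>K - {k'}. \<theta> (var k) * e k \<theta>)" for \<theta> :: "'a \<Rightarrow> real"
  have "AE \<theta> in Pi\<^sub>M P (\<lambda>_. lborel). e k' \<theta> * \<theta> (var k') + h \<theta> \<noteq> 0"
  proof (rule AE_PiM_lborel_affine_nonzero[OF P var(2) meas[OF K(2)] _ indep[OF K(2)] _ e])
    show "h \<in> borel_measurable (Pi\<^sub>M P (\<lambda>_. lborel))"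
      unfolding h_def
      by (intro borel_measurable_sum borel_measurable_times measurable_PiM_lborel_component meas) auto
    have "var k \<noteq> var k'" if "k \<in> K - {k'}" for k
      using that var(1) K(2) by (auto dest: inj_onD)
    then show "h (\<theta>(var k' := t)) = h \<theta>" for \<theta> t
      unfolding h_def using indep by (intro sum.cong) auto
  qed
  moreover have "(\<Sum>k\<in>K. \<theta> (var k) * e k \<theta>) = e k' \<theta> * \<theta> (var k') + h \<theta>" for \<theta>
    unfolding h_def using K by (simp add: sum.remove mult.commute)
  ultimately show ?thesis by simp
qed

text \<open>The output is treated as neuron \<open>0\<close> of an extra layer \<open>Suc (length ws)\<close> whose incoming
  weights are the \<open>Wout k\<close>; this lets hidden neurons and the output be handled uniformly.\<close>

definition edge :: "nat list \<Rightarrow> nat \<Rightarrow> nat \<Rightarrow> nat \<Rightarrow> ('n::finite) prm" where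
  "edge ws l i k = (if l = Suc (length ws) then Wout k else W l i k)"

text \<open>\<open>region_grad ws A \<theta> l i j\<close> is the \<open>j\<close>-th partial derivative of the pre-activation of
  neuron \<open>i\<close> of layer \<open>l\<close> on the region of the pattern \<open>A\<close>.\<close>

fun region_grad ::
  "nat list \<Rightarrow> (nat \<times> nat \<Rightarrow> real) \<Rightarrow> (('n::finite) prm \<Rightarrow> real) \<Rightarrow> nat \<Rightarrow> nat \<Rightarrow> 'n \<Rightarrow> real" where
  "region_grad ws A \<theta> 0 i j = 0"
| "region_grad ws A \<theta> (Suc 0) i j = \<theta> (Win i j)"
| "region_grad ws A \<theta> (Suc (Suc l)) i j =
     (\<Sum>k<ws ! l. \<theta> (edge ws (Suc (Suc l)) i k)
                   * (if A (Suc l, k) = 1 then region_grad ws A \<theta> (Suc l) k j else 0))"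

definition net_grad :: "nat list \<Rightarrow> (nat \<times> nat \<Rightarrow> real) \<Rightarrow> (('n::finite) prm \<Rightarrow> real) \<Rightarrow> real^'n" where
  "net_grad ws A \<theta> = (\<chi> j. region_grad ws A \<theta> (Suc (length ws)) 0 j)"

lemma preact_sign_on_region:
  assumes "x \<in> region ws \<theta> A" "A \<in> patterns ws" "(l, i) \<in> neurons ws"
  shows "preact ws \<theta> l i x - \<theta> (B l i) \<noteq> 0"
    and "0 < preact ws \<theta> l i x - \<theta> (B l i) \<longleftrightarrow> A (l, i) = 1"
proof -
  have "sgn (preact ws \<theta> l i x - \<theta> (B l i)) = A (l, i)" "A (l, i) \<in> {-1, 1}"
    using assms unfolding region_def patterns_def by auto
  then show "preact ws \<theta> l i x - \<theta> (B l i) \<noteq> 0"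
    and "0 < preact ws \<theta> l i x - \<theta> (B l i) \<longleftrightarrow> A (l, i) = 1"
    by (auto simp: sgn_if split: if_splits)
qed

lemma has_derivative_layer_sum:
  fixes \<theta> :: "('n::finite) prm \<Rightarrow> real"
  assumes x: "x \<in> region ws \<theta> A" and A: "A \<in> patterns ws" and l: "1 \<le> l" "l \<le> length ws"
    and preact: "\<And>k. k < ws ! (l - 1) \<Longrightarrow>
      (preact ws \<theta> l k has_derivative (\<lambda>h. \<Sum>j\<in>UNIV. region_grad ws A \<theta> l k j * h $ j)) (at x)"
  shows "((\<lambda>y. \<Sum>k<ws ! (l - 1). c k * max 0 (preact ws \<theta> l k y - \<theta> (B l k))) has_derivative
          (\<lambda>h. \<Sum>j\<in>UNIV. (\<Sum>k<ws ! (l - 1).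
                  c k * (if A (l, k) = 1 then region_grad ws A \<theta> l k j else 0)) * h $ j)) (at x)"
proof -
  have "((\<lambda>y. c k * max 0 (preact ws \<theta> l k y - \<theta> (B l k))) has_derivative
         (\<lambda>h. c k * (if A (l, k) = 1 then \<Sum>j\<in>UNIV. region_grad ws A \<theta> l k j * h $ j else 0))) (at x)"
    if k: "k < ws ! (l - 1)" for k
  proof -
    have n: "(l, k) \<in> neurons ws" using l k by (simp add: neurons_def)
    have "((\<lambda>y. preact ws \<theta> l k y - \<theta> (B l k)) has_derivative
           (\<lambda>h. \<Sum>j\<in>UNIV. region_grad ws A \<theta> l k j * h $ j)) (at x)"
      using preact[OF k] by (auto intro!: derivative_eq_intros)
    from has_derivative_max0[OF this preact_sign_on_region(1)[OF x A n]]
    show ?thesis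
      unfolding preact_sign_on_region(2)[OF x A n] by (rule has_derivative_mult_right)
  qed
  then have "((\<lambda>y. \<Sum>k<ws ! (l - 1). c k * max 0 (preact ws \<theta> l k y - \<theta> (B l k))) has_derivative
      (\<lambda>h. \<Sum>k<ws ! (l - 1). c k * (if A (l, k) = 1 then \<Sum>j\<in>UNIV. region_grad ws A \<theta> l k j * h $ j else 0)))
      (at x)"
    by (intro has_derivative_sum) auto
  moreover have "(\<Sum>k<ws ! (l - 1). c k * (if A (l, k) = 1 then \<Sum>j\<in>UNIV. region_grad ws A \<theta> l k j * h $ j else 0))
      = (\<Sum>j\<in>UNIV. (\<Sum>k<ws ! (l - 1). c k * (if A (l, k) = 1 then region_grad ws A \<theta> l k j else 0)) * h $ j)"
    for h :: "real^'n"
    by (simp add: sum_distrib_left sum_distrib_right mult_ac sum.swap[of _ UNIV]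
        if_distrib[of "\<lambda>s. c _ * s"] sum.If_cases)
  ultimately show ?thesis by simp
qed

lemma has_derivative_preact:
  fixes \<theta> :: "('n::finite) prm \<Rightarrow> real"
  assumes x: "x \<in> region ws \<theta> A" and A: "A \<in> patterns ws"
  shows "Suc l \<le> length ws \<Longrightarrow> i < ws ! l \<Longrightarrow>
    (preact ws \<theta> (Suc l) i has_derivative (\<lambda>h. \<Sum>j\<in>UNIV. region_grad ws A \<theta> (Suc l) i j * h $ j)) (at x)"
proof (induction l arbitrary: i)
  case 0
  show ?case by (auto intro!: derivative_eq_intros bounded_linear.has_derivative[OF bounded_linear_vec_nth])
next
  case (Suc l)
  have "Suc (Suc l) \<noteq> Suc (length ws)" using Suc.prems by simp
  then show ?case
    using has_derivative_layer_sum[OF x A, of "Suc l" "\<lambda>k. \<theta> (W (Suc (Suc l)) i k)"] Suc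
    by (simp add: edge_def)
qed

lemma has_gderiv_net:
  fixes \<theta> :: "('n::finite) prm \<Rightarrow> real"
  assumes x: "x \<in> region ws \<theta> A" and A: "A \<in> patterns ws" and ws: "ws \<noteq> []"
  shows "GDERIV (net ws \<theta>) x :> net_grad ws A \<theta>"
proof -
  obtain l where l: "length ws = Suc l" using ws by (cases ws) auto
  have "((\<lambda>y. \<Sum>k<ws ! l. \<theta> (Wout k) * max 0 (preact ws \<theta> (Suc l) k y - \<theta> (B (Suc l) k))) has_derivative
      (\<lambda>h. \<Sum>j\<in>UNIV. region_grad ws A \<theta> (Suc (Suc l)) 0 j * h $ j)) (at x)"
    using has_derivative_layer_sum[OF x A, of "Suc l" "\<lambda>k. \<theta> (Wout k)"] has_derivative_preact[OF x A] l
    by (simp add: edge_def)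
  then have "(net ws \<theta> has_derivative (\<lambda>h. \<Sum>j\<in>UNIV. region_grad ws A \<theta> (Suc (Suc l)) 0 j * h $ j)) (at x)"
    unfolding net_def l using has_derivative_diff[OF _ has_derivative_const] by fastforce
  then show ?thesis
    by (simp add: gderiv_def net_grad_def inner_vec_def l mult.commute)
qed

lemma finite_params: "finite (params ws)"
proof -
  have "params ws \<subseteq> (\<lambda>(i, j). Win i j) ` ({..<ws ! 0} \<times> UNIV)
      \<union> (\<lambda>(l, i, k). W l i k) ` ({..length ws} \<times> (\<Union>l\<le>length ws. {..<ws ! l}) \<times> (\<Union>l\<le>length ws. {..<ws ! l}))
      \<union> (\<lambda>(l, i). B l i) ` ({..length ws} \<times> (\<Union>l\<le>length ws. {..<ws ! l}))
      \<union> Wout ` {..<ws ! (length ws - 1)} \<union> {Bout}"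
    unfolding params_def by (force simp: image_iff)
  then show ?thesis by (rule finite_subset) auto
qed

lemma edge_in_params:
  assumes "l < length ws" "Suc l < length ws \<Longrightarrow> i < ws ! Suc l" "k < ws ! l"
  shows "edge ws (Suc (Suc l)) i k \<in> params ws"
  using assms by (auto simp: edge_def params_def dest: sym)

lemma measurable_region_grad:
  "(\<lambda>\<theta>. region_grad ws A \<theta> l i j) \<in> borel_measurable (Pi\<^sub>M P (\<lambda>_. lborel))"
proof (induction ws A _ l i j rule: region_grad.induct)
  case (3 ws A _ l i j)
  have "(\<lambda>\<theta>. if A (Suc l, k) = 1 then region_grad ws A \<theta> (Suc l) k j else 0)
      \<in> borel_measurable (Pi\<^sub>M P (\<lambda>_. lborel))" if "k < ws ! l" for k
    using 3 that by (cases "A (Suc l, k) = 1") auto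
  then show ?case
    by (auto intro!: borel_measurable_sum borel_measurable_times measurable_PiM_lborel_component)
qed (auto intro: measurable_PiM_lborel_component)

lemma region_grad_fun_upd_edge:
  "l < m \<Longrightarrow> m \<le> Suc (length ws) \<Longrightarrow>
    region_grad ws A (\<theta>(edge ws m a b := t)) l i j = region_grad ws A \<theta> l i j"
  by (induction ws A \<theta> l i j rule: region_grad.induct) (auto simp: edge_def intro!: sum.cong)

lemma AE_edge_sum_nonzero:
  fixes e :: "nat \<Rightarrow> (('n::finite) prm \<Rightarrow> real) \<Rightarrow> real"
  assumes l: "l < length ws" "Suc l < length ws \<Longrightarrow> i < ws ! Suc l" and k': "k' < ws ! l"
    and meas: "\<And>k. e k \<in> borel_measurable (Pi\<^sub>M (params ws) (\<lambda>_. lborel))"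
    and indep: "\<And>k \<theta> t. e k (\<theta>(edge ws (Suc (Suc l)) i k' := t)) = e k \<theta>"
    and e: "AE \<theta> in Pi\<^sub>M (params ws) (\<lambda>_. lborel). e k' \<theta> \<noteq> 0"
  shows "AE \<theta> in Pi\<^sub>M (params ws) (\<lambda>_. lborel).
    (\<Sum>k<ws ! l. \<theta> (edge ws (Suc (Suc l)) i k) * e k \<theta>) \<noteq> 0"
proof (rule AE_PiM_lborel_sum_nonzero[where var = "edge ws (Suc (Suc l)) i" and k' = k'])
  show "inj_on (edge ws (Suc (Suc l)) i) {..<ws ! l}"
    by (auto simp: inj_on_def edge_def split: if_splits)
qed (use l k' edge_in_params finite_params meas indep e in auto)

lemma active_every_layerE:
  assumes "active_every_layer ws A" "1 \<le> l" "l \<le> length ws"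
  obtains k where "k < ws ! (l - 1)" "A (l, k) = 1"
proof -
  have "l \<in> {1..length ws}" using assms(2,3) by simp
  then show ?thesis using assms(1) that unfolding active_every_layer_def by blast
qed

lemma AE_region_grad_nonzero:
  assumes ws: "ws \<noteq> []" and A: "active_every_layer ws A"
  shows "l \<le> length ws \<Longrightarrow> (l < length ws \<Longrightarrow> i < ws ! l) \<Longrightarrow>
    AE \<theta> in Pi\<^sub>M (params ws) (\<lambda>_. lborel). region_grad ws A \<theta> (Suc l) i j \<noteq> 0"
proof (induction l arbitrary: i)
  case 0
  then have "Win i j \<in> params ws" using ws by (simp add: params_def)
  from AE_PiM_lborel_affine_nonzero[OF finite_params this, of "\<lambda>_. 1" "\<lambda>_. 0"]
  show ?case by simp
next
  case (Suc l)
  obtain k0 where k0: "k0 < ws ! l" "A (Suc l, k0) = 1"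
    using active_every_layerE[OF A, of "Suc l"] Suc.prems(1) by auto
  have "AE \<theta> in Pi\<^sub>M (params ws) (\<lambda>_. lborel).
      (\<Sum>k<ws ! l. \<theta> (edge ws (Suc (Suc l)) i k)
         * (if A (Suc l, k) = 1 then region_grad ws A \<theta> (Suc l) k j else 0)) \<noteq> 0"
    using Suc k0
    by (intro AE_edge_sum_nonzero[where k' = k0])
       (auto simp: region_grad_fun_upd_edge intro!: measurable_If measurable_region_grad)
  then show ?case by simp
qed

lemma AE_region_grad_neq:
  assumes ws: "ws \<noteq> []" and A1: "active_every_layer ws A1" and A2: "active_every_layer ws A2"
  shows "l \<le> length ws \<Longrightarrow> (l < length ws \<Longrightarrow> i < ws ! l) \<Longrightarrow>
    (\<exists>(m, k)\<in>neurons ws. m \<le> l \<and> (A1 (m, k) = 1) \<noteq> (A2 (m, k) = 1)) \<Longrightarrow>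
    AE \<theta> in Pi\<^sub>M (params ws) (\<lambda>_. lborel).
      region_grad ws A1 \<theta> (Suc l) i j \<noteq> region_grad ws A2 \<theta> (Suc l) i j"
proof (induction l arbitrary: i)
  case 0
  then show ?case by (auto simp: neurons_def)
next
  case (Suc l)
  define e where "e k \<theta> = (if A1 (Suc l, k) = 1 then region_grad ws A1 \<theta> (Suc l) k j else 0)
    - (if A2 (Suc l, k) = 1 then region_grad ws A2 \<theta> (Suc l) k j else 0)" for k \<theta>
  have "\<exists>k0<ws ! l. AE \<theta> in Pi\<^sub>M (params ws) (\<lambda>_. lborel). e k0 \<theta> \<noteq> 0"
  proof (cases "\<exists>k<ws ! l. (A1 (Suc l, k) = 1) \<noteq> (A2 (Suc l, k) = 1)")
    case True
    then obtain k0 where k0: "k0 < ws ! l" "(A1 (Suc l, k0) = 1) \<noteq> (A2 (Suc l, k0) = 1)" by blast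
    then show ?thesis
      using AE_region_grad_nonzero[OF ws A1, of l k0 j] AE_region_grad_nonzero[OF ws A2, of l k0 j]
        Suc.prems(1)
      by (cases "A1 (Suc l, k0) = 1") (auto simp: e_def)
  next
    case False
    obtain k0 where k0: "k0 < ws ! l" "A1 (Suc l, k0) = 1"
      using active_every_layerE[OF A1, of "Suc l"] Suc.prems(1) by auto
    \<comment> \<open>the patterns agree on layer Suc l, so they already differ on an earlier layer\<close>
    have "\<exists>(m, k)\<in>neurons ws. m \<le> l \<and> (A1 (m, k) = 1) \<noteq> (A2 (m, k) = 1)"
      using Suc.prems(3) False by (fastforce simp: neurons_def le_Suc_eq)
    then show ?thesis
      using Suc.IH[of k0] Suc.prems(1) k0 False by (auto simp: e_def)
  qed
  then obtain k0 where "k0 < ws ! l" "AE \<theta> in Pi\<^sub>M (params ws) (\<lambda>_. lborel). e k0 \<theta> \<noteq> 0"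
    by blast
  then have "AE \<theta> in Pi\<^sub>M (params ws) (\<lambda>_. lborel).
      (\<Sum>k<ws ! l. \<theta> (edge ws (Suc (Suc l)) i k) * e k \<theta>) \<noteq> 0"
    using Suc.prems(1,2)
    by (intro AE_edge_sum_nonzero[where k' = k0])
       (auto simp: e_def region_grad_fun_upd_edge
             intro!: borel_measurable_diff measurable_If measurable_region_grad)
  then show ?case
    by (simp add: e_def right_diff_distrib sum_subtractf)
qed

lemma finite_patterns: "finite (patterns ws)"
proof -
  have "neurons ws \<subseteq> {..length ws} \<times> (\<Union>l\<le>length ws. {..<ws ! l})"
    by (force simp: neurons_def)
  then have "finite (neurons ws)" by (rule finite_subset) auto
  then show ?thesis unfolding patterns_def by (intro finite_PiE) auto
qed

lemma patterns_neq_imp_activity_differs: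
  assumes "A1 \<in> patterns ws" "A2 \<in> patterns ws" "A1 \<noteq> A2"
  obtains n where "n \<in> neurons ws" "(A1 n = 1) \<noteq> (A2 n = 1)"
proof -
  obtain n where n: "n \<in> neurons ws" "A1 n \<noteq> A2 n"
    using assms PiE_ext unfolding patterns_def by metis
  moreover have "A1 n \<in> {-1, 1}" "A2 n \<in> {-1, 1}"
    using assms(1,2) n(1) unfolding patterns_def by auto
  ultimately have "(A1 n = 1) \<noteq> (A2 n = 1)" by auto
  with n(1) show ?thesis by (rule that)
qed

lemma AE_net_grad_neq:
  assumes ws: "ws \<noteq> []" and A: "A1 \<in> patterns ws" "A2 \<in> patterns ws" "A1 \<noteq> A2"
    and act: "active_every_layer ws A1" "active_every_layer ws A2"
  shows "AE \<theta> in Pi\<^sub>M (params ws) (\<lambda>_. lborel). net_grad ws A1 \<theta> \<noteq> net_grad ws A2 \<theta>"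
proof -
  obtain n where "n \<in> neurons ws" "(A1 n = 1) \<noteq> (A2 n = 1)"
    using patterns_neq_imp_activity_differs[OF A] .
  then have "\<exists>(m, k)\<in>neurons ws. m \<le> length ws \<and> (A1 (m, k) = 1) \<noteq> (A2 (m, k) = 1)"
    by (auto simp: neurons_def)
  from AE_region_grad_neq[OF ws act, of "length ws" 0, OF _ _ this]
  have "AE \<theta> in Pi\<^sub>M (params ws) (\<lambda>_. lborel).
      region_grad ws A1 \<theta> (Suc (length ws)) 0 j \<noteq> region_grad ws A2 \<theta> (Suc (length ws)) 0 j" for j
    by simp
  then show ?thesis
    by (rule eventually_mono) (metis net_grad_def vec_lambda_beta)
qed

theorem mainTheorem9:
  fixes ws :: "nat list"
  assumes "ws \<noteq> []" and "\<forall>w\<in>set ws. 0 < w"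
  shows "AE \<theta> in (\<Pi>\<^sub>M p\<in>(params ws :: ('n::finite) prm set). lborel).
           \<forall>A1 A2. A1 \<in> patterns ws \<and> A2 \<in> patterns ws \<and> A1 \<noteq> A2
              \<and> region ws \<theta> A1 \<noteq> {} \<and> region ws \<theta> A2 \<noteq> {}
              \<and> active_every_layer ws A1 \<and> active_every_layer ws A2
              \<longrightarrow> (\<exists>g1 g2. g1 \<noteq> g2
                     \<and> (\<forall>x\<in>region ws \<theta> A1. GDERIV (net ws \<theta>) x :> g1)
                     \<and> (\<forall>x\<in>region ws \<theta> A2. GDERIV (net ws \<theta>) x :> g2))"
proof -
  let ?pairs = "{(A1, A2). A1 \<in> patterns ws \<and> A2 \<in> patterns ws \<and> A1 \<noteq> A2
                  \<and> active_every_layer ws A1 \<and> active_every_layer ws A2}"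
  have "finite ?pairs"
    by (rule finite_subset[of _ "patterns ws \<times> patterns ws"]) (auto simp: finite_patterns)
  then have "AE \<theta> in (\<Pi>\<^sub>M p\<in>(params ws :: 'n prm set). lborel).
      \<forall>(A1, A2)\<in>?pairs. net_grad ws A1 \<theta> \<noteq> net_grad ws A2 \<theta>"
    using AE_net_grad_neq[OF assms(1)] by (intro eventually_ball_finite) auto
  then show ?thesis
    by (rule eventually_mono) (use has_gderiv_net assms(1) in blast)
qed

end
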